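(* Let $\mathbb{F}$ be a finite field, $n\ge2$, and let $S$ be an isolated subsemigroup of $M(n,\mathbb{F})$. Suppose one of the following holds: (1) $S$ contains the zero matrix; (2) $S$ contains two idempotents $e(V_1,V_2)$ and $e(V'_1,V'_2)$ of rank $n-1$ with $V_2\subseteq V'_1$; (3) $S$ contains an idempotent of rank at most $n-2$. Then $I_{n-1}\subseteq S$.
   Context: $M(n,\mathbb{F})$ is the semigroup of $n\times n$ matrices over $\mathbb{F}$, identified with linear operators on $\mathbb{F}^n$. For a direct sum decomposition $\mathbb{F}^n=V_1\oplus V_2$, $e(V_1,V_2)$ denotes the idempotent projection onto $V_1$ along $V_2$ (every idempotent of $M(n,\mathbb{F})$ is of this form). $I_{n-1}$ is the set of all matrices of rank at most $n-1$. A subsemigroup $T$ of a semigroup $S$ is isolated if for all $x\in S$ and positive integers $m$, $x^m\in T$ implies $x\in T$. *)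

theory Defs
  imports "HOL-Analysis.Analysis"
begin

text \<open>Matrix power w.r.t. matrix multiplication (the type-class power on vec is componentwise).\<close>
primrec matpow :: "'a::semiring_1^'n^'n \<Rightarrow> nat \<Rightarrow> 'a^'n^'n" where
  "matpow A 0 = mat 1"
| "matpow A (Suc k) = A ** matpow A k"

definition mat_subsemigroup :: "('a::semiring_1^'n^'n) set \<Rightarrow> bool" where
  "mat_subsemigroup S \<longleftrightarrow> S \<noteq> {} \<and> (\<forall>A\<in>S. \<forall>B\<in>S. A ** B \<in> S)"

definition mat_isolated :: "('a::semiring_1^'n^'n) set \<Rightarrow> bool" where
  "mat_isolated S \<longleftrightarrow> (\<forall>x m. 0 < m \<longrightarrow> matpow x m \<in> S \<longrightarrow> x \<in> S)"

end

theory Submission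
  imports Defs
begin

(* Since F is finite, some positive power of every matrix is idempotent, and isolation puts a
   matrix into S as soon as such a power lies in S; so only idempotents matter.

   If 0 is in S, every singular idempotent e is in S, by induction on its rank: e = f + c r with
   f an idempotent of smaller rank, and because e is singular f has a second kernel pair c', r'.
   Then a = f + c r' and b = f + c' r both square to f, so they lie in S, and so does a b = e.

   Conversely an idempotent g in S of rank at most n - 2 gives 0 in S: if p in S is idempotent,
   p v = v, w p = w and w v = 0, then y = p + v w satisfies y^k = p + k v w, so y^(char F) = p
   and y is in S; a suitable choice makes g y g of smaller rank than g, and we iterate.
   Under hypothesis (2) such a g is an idempotent power of E E', whose rank is below n - 1 because
   a left null vector of E' is fixed by E. *)

lemma matrix_add_rdistrib: "((A::'a::semiring_1^'n^'m) + B) ** C = A ** C + B ** C"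
  by (simp add: vec_eq_iff matrix_matrix_mult_def algebra_simps sum.distrib)

lemma matrix_diff_ldistrib: "(A::'a::ring_1^'n^'m) ** (B - C) = A ** B - A ** C"
  by (simp add: vec_eq_iff matrix_matrix_mult_def algebra_simps sum_subtractf)

lemma matrix_diff_rdistrib: "((A::'a::ring_1^'n^'m) - B) ** C = A ** C - B ** C"
  by (simp add: vec_eq_iff matrix_matrix_mult_def algebra_simps sum_subtractf)

lemma scalar_product_commute: "scalar_product u v = scalar_product v (u::'a::comm_semiring_1^'n)"
  by (simp add: scalar_product_def mult.commute)

lemma scalar_product_vector_matrix_mult:
  "scalar_product (x v* A) u = scalar_product x (A *v (u::'a::comm_semiring_1^'n))"
  unfolding scalar_product_def vector_matrix_mult_def matrix_vector_mult_def
  by (simp add: sum_distrib_left sum_distrib_right mult_ac) (rule sum.swap)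

lemma
  fixes u v w :: "'a::comm_ring_1^'n"
  shows scalar_product_add_left: "scalar_product (u + w) v = scalar_product u v + scalar_product w v"
    and scalar_product_add_right: "scalar_product u (v + w) = scalar_product u v + scalar_product u w"
    and scalar_product_diff_left: "scalar_product (u - w) v = scalar_product u v - scalar_product w v"
    and scalar_product_diff_right: "scalar_product u (v - w) = scalar_product u v - scalar_product u w"
    and scalar_product_scale_left: "scalar_product (c *s u) v = c * scalar_product u v"
    and scalar_product_scale_right: "scalar_product u (c *s v) = c * scalar_product u v"
  by (simp_all add: scalar_product_def algebra_simps sum.distrib sum_subtractf sum_distrib_left)

lemma scalar_product_zero [simp]: "scalar_product 0 v = 0" "scalar_product v 0 = 0"
  by (simp_all add: scalar_product_def)

lemma scalar_product_axis_right: "scalar_product v (axis i 1) = (v::'a::semiring_1^'n) $ i"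
  by (simp add: scalar_product_def axis_def if_distrib[of "\<lambda>c. _ * c"] cong: if_cong)

lemma scalar_product_eq_1_exists:
  fixes y :: "'a::field^'n"
  assumes "y \<noteq> 0"
  obtains w where "scalar_product y w = 1"
proof -
  obtain i where "y $ i \<noteq> 0" using assms by (metis vec_eq_iff zero_index)
  then have "scalar_product y ((1 / y $ i) *s axis i 1) = 1"
    by (simp add: scalar_product_scale_right scalar_product_axis_right)
  then show ?thesis by (rule that)
qed

definition outer_product :: "'a::semiring_1^'n \<Rightarrow> 'a^'m \<Rightarrow> 'a^'m^'n" where
  "outer_product u v = (\<chi> i j. u $ i * v $ j)"

lemma outer_product_mult_outer_product:
  fixes z :: "'a::comm_semiring_1^'p"
  shows "outer_product u v ** outer_product w z = outer_product (scalar_product v w *s u) z"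
  by (simp add: vec_eq_iff matrix_matrix_mult_def outer_product_def scalar_product_def
      sum_distrib_left sum_distrib_right mult_ac)

lemma matrix_mult_outer_product:
  fixes v :: "'a::comm_semiring_1^'p"
  shows "A ** outer_product u v = outer_product (A *v u) v"
  by (simp add: vec_eq_iff matrix_matrix_mult_def outer_product_def matrix_vector_mult_def
      sum_distrib_left sum_distrib_right mult_ac)

lemma outer_product_mult_matrix:
  fixes u :: "'a::comm_semiring_1^'m"
  shows "outer_product u v ** A = outer_product u (v v* A)"
  by (simp add: vec_eq_iff matrix_matrix_mult_def outer_product_def vector_matrix_mult_def
      sum_distrib_left sum_distrib_right mult_ac)

lemma outer_product_mult_vector:
  fixes u :: "'a::comm_semiring_1^'m"
  shows "outer_product u v *v x = scalar_product v x *s u"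
  by (simp add: vec_eq_iff outer_product_def matrix_vector_mult_def scalar_product_def
      sum_distrib_left sum_distrib_right mult_ac)

lemma vector_mult_outer_product:
  fixes v :: "'a::comm_semiring_1^'p"
  shows "x v* outer_product u v = scalar_product x u *s v"
  by (simp add: vec_eq_iff outer_product_def vector_matrix_mult_def scalar_product_def
      sum_distrib_left sum_distrib_right mult_ac)

lemma outer_product_zero_left [simp]: "outer_product 0 v = 0"
  and outer_product_zero_right [simp]: "outer_product u 0 = 0"
  by (simp_all add: vec_eq_iff outer_product_def)

lemmas rank_one_calculus =
  matrix_add_ldistrib matrix_add_rdistrib matrix_diff_ldistrib matrix_diff_rdistrib
  matrix_vector_mult_add_rdistrib matrix_vector_mult_diff_rdistrib
  vector_matrix_mult_add_rdistrib vector_matrix_mult_diff_rdistrib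
  outer_product_mult_outer_product matrix_mult_outer_product outer_product_mult_matrix
  outer_product_mult_vector vector_mult_outer_product

lemma linear_vector_matrix_mult: "Vector_Spaces.linear (*s) (*s) (\<lambda>y. y v* (A::'a::field^'n^'m))"
proof -
  have "(\<lambda>y. y v* A) = (*v) (transpose A)" by (simp add: fun_eq_iff)
  then show ?thesis by simp
qed

lemma vector_matrix_mult_eq_sum_rows: "y v* (A::'a::field^'n^'m) = (\<Sum>i\<in>UNIV. y $ i *s row i A)"
  by (simp add: vec_eq_iff vector_matrix_mult_def row_def mult.commute)

lemma row_eq_axis_vector_matrix_mult: "row i (A::'a::field^'n^'m) = axis i 1 v* A"
  by (simp add: vec_eq_iff vector_matrix_mult_def axis_def row_def
      if_distrib[of "\<lambda>c. c * _"] cong: if_cong)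

lemma rank_eq_dim_row_space: "rank (A::'a::field^'n^'m) = vec.dim (range (\<lambda>y. y v* A))"
proof -
  have "rows A \<subseteq> range (\<lambda>y. y v* A)"
    using row_eq_axis_vector_matrix_mult by (auto simp: rows_def)
  moreover have "y v* A \<in> vec.span (rows A)" for y
    unfolding vector_matrix_mult_eq_sum_rows
    by (intro vec.span_sum vec.span_scale vec.span_base) (auto simp: rows_def)
  then have "range (\<lambda>y. y v* A) \<subseteq> vec.span (rows A)" by blast
  ultimately have "vec.span (rows A) = vec.span (range (\<lambda>y. y v* A))"
    using vec.span_mono vec.span_span by blast
  then show ?thesis unfolding row_rank_def_gen by (rule vec.span_eq_dim)
qed

lemma row_space_mult: "range (\<lambda>y. y v* (A ** B)) = (\<lambda>z. z v* B) ` range (\<lambda>y. y v* A)"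
  by (auto simp: vector_matrix_mul_assoc image_iff)

lemma rank_mul_le_left_gen: "rank ((A::'a::field^'n^'m) ** (B::'a^'p^'n)) \<le> rank A"
  unfolding rank_eq_dim_row_space row_space_mult
  by (rule vec.dim_image_le[OF linear_vector_matrix_mult])

lemma rank_mul_less_left:
  fixes A :: "'a::field^'n^'m" and B :: "'a^'p^'n"
  assumes s: "s \<in> range (\<lambda>y. y v* A)" "s \<noteq> 0" "s v* B = 0"
  shows "rank (A ** B) < rank A"
proof -
  let ?R = "range (\<lambda>y. y v* A)" and ?h = "\<lambda>z. z v* B"
  have "vec.independent {s}" using s(2) by (simp add: vec.independent_insert)
  then obtain C where C: "{s} \<subseteq> C" "C \<subseteq> ?R" "vec.independent C" "?R \<subseteq> vec.span C"
    using vec.maximal_independent_subset_extend[of "{s}" ?R] s(1) by blast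
  have fin: "finite C" using C(3) vec.finiteI_independent by blast
  have "?h ` ?R \<subseteq> vec.span (?h ` (C - {s}))"
  proof
    fix x assume "x \<in> ?h ` ?R"
    then obtain v where v: "v \<in> ?R" "x = ?h v" by blast
    have "insert s (C - {s}) = C" using C(1) by auto
    then have "v \<in> vec.span (insert s (C - {s}))" using C(4) v(1) by auto
    then obtain k where k: "v - k *s s \<in> vec.span (C - {s})" using vec.span_breakdown_eq by blast
    have "?h (v - k *s s) = x"
      using v(2) s(3) by (simp add: vector_matrix_mult_diff_distrib scalar_vector_matrix_assoc)
    then show "x \<in> vec.span (?h ` (C - {s}))"
      using k vec.linear_span_image[OF linear_vector_matrix_mult[of B], of "C - {s}"] by blast
  qed
  then have "vec.dim (?h ` ?R) \<le> card (?h ` (C - {s}))"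
    using vec.dim_le_card fin by blast
  also have "\<dots> \<le> card (C - {s})" using fin by (simp add: card_image_le)
  also have "\<dots> < card C" using fin C(1) card_gt_0_iff[of C] by auto
  also have "\<dots> = vec.dim ?R" using C vec.basis_card_eq_dim by blast
  finally show ?thesis unfolding rank_eq_dim_row_space row_space_mult .
qed

lemma rank_add_outer_product_le:
  "rank ((A::'a::field^'n^'m) + outer_product u q) \<le> rank A + 1"
proof -
  have "range (\<lambda>y. y v* (A + outer_product u q)) \<subseteq> vec.span (insert q (range (\<lambda>y. y v* A)))"
  proof
    fix z assume "z \<in> range (\<lambda>y. y v* (A + outer_product u q))"
    then obtain y where "z = y v* A + scalar_product y u *s q"
      by (auto simp: vector_matrix_mult_add_rdistrib vector_mult_outer_product)
    then show "z \<in> vec.span (insert q (range (\<lambda>y. y v* A)))"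
      by (metis vec.span_add vec.span_scale vec.span_base insertI1 insertI2 rangeI)
  qed
  then have "rank (A + outer_product u q) \<le> vec.dim (insert q (range (\<lambda>y. y v* A)))"
    unfolding rank_eq_dim_row_space by (rule vec.dim_mono)
  also have "\<dots> \<le> rank A + 1" unfolding rank_eq_dim_row_space by (simp add: vec.dim_insert)
  finally show ?thesis .
qed

lemma rank_eq_CARD_if_row_space_UNIV: "range (\<lambda>y. y v* (A::'a::field^'n^'m)) = UNIV \<Longrightarrow> rank A = CARD('n)"
  unfolding rank_eq_dim_row_space using vec_dim_card by metis

lemma left_null_vector_exists:
  fixes A :: "'a::field^'n^'n"
  assumes "rank A < CARD('n)"
  obtains y where "y \<noteq> 0" "y v* A = 0"
proof -
  have "\<not> surj (\<lambda>y. y v* A)"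
    using rank_eq_CARD_if_row_space_UNIV assms by force
  then have "\<not> inj (\<lambda>y. y v* A)"
    using vec.linear_injective_imp_surjective[OF linear_vector_matrix_mult] by blast
  then show ?thesis
    using vec.linear_inj_iff_eq_0[OF linear_vector_matrix_mult[of A]] that by blast
qed

(* Adding e_i q with q outside the row space forces every left null vector of the sum to vanish
   at i. *)
lemma left_null_vector_with_zero_entry:
  fixes A :: "'a::field^'n^'n"
  assumes "rank A + 2 \<le> CARD('n)"
  obtains y where "y \<noteq> 0" "y v* A = 0" "y $ i = 0"
proof -
  obtain q where q: "q \<notin> range (\<lambda>y. y v* A)"
    using rank_eq_CARD_if_row_space_UNIV assms by force
  let ?A' = "A + outer_product (axis i 1) q"
  have A': "y v* ?A' = y v* A + y $ i *s q" for y
    by (simp add: vector_matrix_mult_add_rdistrib vector_mult_outer_product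
        scalar_product_axis_right)
  have "rank ?A' < CARD('n)" using rank_add_outer_product_le[of A "axis i 1" q] assms by simp
  then obtain y where y: "y \<noteq> 0" "y v* ?A' = 0" by (rule left_null_vector_exists)
  have "y $ i = 0"
  proof (rule ccontr)
    assume yi: "y $ i \<noteq> 0"
    have "q = (- (1 / y $ i) *s y) v* A"
      using y(2) yi unfolding A' scalar_vector_matrix_assoc
      by (simp add: vec_eq_iff field_simps add_eq_0_iff)
    then show False using q by blast
  qed
  then show ?thesis using that y A'[of y] by simp
qed

lemma left_null_space_dual_pair:
  fixes A :: "'a::field^'n^'n"
  assumes "rank A + 2 \<le> CARD('n)"
  obtains z1 z2 \<psi> \<rho> where "z1 v* A = 0" "z2 v* A = 0"
    "scalar_product z1 \<psi> = 1" "scalar_product z1 \<rho> = 0"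
    "scalar_product z2 \<psi> = 0" "scalar_product z2 \<rho> = 1"
proof -
  have "rank A < CARD('n)" using assms by simp
  then obtain y where y: "y \<noteq> 0" "y v* A = 0" by (rule left_null_vector_exists)
  then obtain i where i: "y $ i \<noteq> 0" by (metis vec_eq_iff zero_index)
  define \<psi> where "\<psi> = (1 / y $ i) *s axis i 1"
  obtain z2 where z2: "z2 \<noteq> 0" "z2 v* A = 0" "z2 $ i = 0"
    using left_null_vector_with_zero_entry[OF assms] by blast
  obtain \<rho> where z2\<rho>: "scalar_product z2 \<rho> = 1" using z2(1) by (rule scalar_product_eq_1_exists)
  define z1 where "z1 = y - scalar_product y \<rho> *s z2"
  show ?thesis
  proof (rule that)
    show "z1 v* A = 0"
      by (simp add: z1_def vector_matrix_mult_diff_distrib scalar_vector_matrix_assoc y z2)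
    show "scalar_product z2 \<psi> = 0" "scalar_product z2 \<rho> = 1"
      by (simp_all add: \<psi>_def scalar_product_scale_right scalar_product_axis_right z2 z2\<rho>)
    then show "scalar_product z1 \<psi> = 1" "scalar_product z1 \<rho> = 0"
      using i by (simp_all add: z1_def \<psi>_def scalar_product_diff_left scalar_product_scale_left
          scalar_product_scale_right scalar_product_axis_right)
  qed (use z2 in simp)
qed

lemma idempotent_fixed_pair:
  fixes e :: "'a::field^'n^'n"
  assumes ee: "e ** e = e" and "e \<noteq> 0"
  obtains c r where "e *v c = c" "r v* e = r" "scalar_product r c = 1"
proof -
  obtain x where "e *v x \<noteq> 0" using assms(2) matrix_eq[of e 0] by auto
  then obtain \<delta> where \<delta>: "scalar_product (e *v x) \<delta> = 1" by (rule scalar_product_eq_1_exists)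
  show ?thesis
  proof (rule that)
    show "e *v (e *v x) = e *v x" "\<delta> v* e v* e = \<delta> v* e"
      by (simp_all add: matrix_vector_mul_assoc vector_matrix_mul_assoc ee)
    have "scalar_product (\<delta> v* e) (e *v x) = scalar_product \<delta> (e *v x)"
      by (simp add: scalar_product_vector_matrix_mult matrix_vector_mul_assoc ee)
    then show "scalar_product (\<delta> v* e) (e *v x) = 1"
      using \<delta> scalar_product_commute by metis
  qed
qed

lemma idempotent_kernel_projection:
  fixes e :: "'a::comm_ring_1^'n^'n"
  assumes ee: "e ** e = e"
  shows "e *v (w - e *v w) = 0"
    and "y v* e = 0 \<Longrightarrow> scalar_product y (w - e *v w) = scalar_product y w"
  by (simp_all add: matrix_vector_mult_diff_distrib matrix_vector_mul_assoc ee
      scalar_product_diff_right scalar_product_vector_matrix_mult[symmetric])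

lemma idempotent_sub_outer_product:
  fixes e :: "'a::field^'n^'n"
  assumes ee: "e ** e = e" and c: "e *v c = c" and r: "r v* e = r" and rc: "scalar_product r c = 1"
  shows "(e - outer_product c r) ** (e - outer_product c r) = e - outer_product c r"
    and "(e - outer_product c r) *v c = 0" and "r v* (e - outer_product c r) = 0"
    and "rank (e - outer_product c r) < rank e"
proof -
  show "(e - outer_product c r) ** (e - outer_product c r) = e - outer_product c r"
    "(e - outer_product c r) *v c = 0" "r v* (e - outer_product c r) = 0"
    by (simp_all add: rank_one_calculus ee c r rc)
  have "e - outer_product c r = e ** (mat 1 - outer_product c r)"
    by (simp add: rank_one_calculus c)
  moreover have "r v* (mat 1 - outer_product c r) = 0"
    by (simp add: rank_one_calculus rc)
  moreover have "r \<in> range (\<lambda>y. y v* e)" "r \<noteq> 0"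
    using r rc by (metis rangeI, auto)
  ultimately show "rank (e - outer_product c r) < rank e"
    using rank_mul_less_left by metis
qed

lemma matpow_add: "matpow x (a + b) = matpow x a ** matpow x b"
  by (induction a) (simp_all add: matrix_mul_assoc)

lemma matpow_mem:
  assumes semi: "mat_subsemigroup S" and x: "x \<in> S"
  shows "0 < m \<Longrightarrow> matpow x m \<in> S"
proof (induction m rule: nat_induct_non_zero)
  case 1 then show ?case using x by simp
next
  case (Suc m) then show ?case using semi x by (simp add: mat_subsemigroup_def)
qed

lemma matpow_2: "matpow x 2 = x ** x"
  by (simp add: numeral_2_eq_2)

lemma rank_matpow_le: "0 < m \<Longrightarrow> rank (matpow (x::'a::field^'n^'n) m) \<le> rank x"
  by (cases m) (simp_all add: rank_mul_le_left_gen)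

lemma mat_isolated_square_mem: "mat_isolated S \<Longrightarrow> a ** a \<in> S \<Longrightarrow> a \<in> S"
  unfolding mat_isolated_def by (metis matpow_2 zero_less_numeral)

lemma matpow_idempotent_exists:
  fixes x :: "'a::{semiring_1,finite}^'n^'n"
  obtains m where "0 < m" "matpow x m ** matpow x m = matpow x m"
proof -
  have "\<not> inj (matpow x)"
    using range_inj_infinite finite_subset[OF subset_UNIV finite_class.finite_UNIV] by blast
  then obtain i j where ij: "i < j" "matpow x i = matpow x j"
    unfolding inj_def by (metis linorder_neqE_nat)
  define p where "p = j - i"
  have period: "matpow x (i + t * p) = matpow x i" for t
  proof (induction t)
    case (Suc t)
    have "i + Suc t * p = t * p + j" using ij(1) by (simp add: p_def)
    then have "matpow x (i + Suc t * p) = matpow x (t * p) ** matpow x i"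
      by (metis matpow_add ij(2))
    also have "\<dots> = matpow x i"
      using Suc by (simp add: add.commute flip: matpow_add)
    finally show ?case .
  qed simp
  define m where "m = Suc i * p"
  have "0 < p" using ij(1) by (simp add: p_def)
  then have m: "0 < m" "i \<le> m" by (simp_all add: m_def trans_le_add2)
  have "m + m = (m - i) + (i + Suc i * p)" using m(2) by (simp add: m_def)
  then have "matpow x m ** matpow x m = matpow x (m - i) ** matpow x (i + Suc i * p)"
    by (metis matpow_add)
  also have "\<dots> = matpow x m" by (simp only: period flip: matpow_add) (simp add: m(2))
  finally show ?thesis using m(1) that by blast
qed

lemma idempotent_power_mem:
  fixes x :: "'a::{field,finite}^'n^'n"
  assumes "mat_subsemigroup S" and "x \<in> S"
  obtains e where "e \<in> S" "e ** e = e" "rank e \<le> rank x"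
  using matpow_idempotent_exists[of x] matpow_mem[OF assms] rank_matpow_le by metis

lemma idempotent_add_outer_product_kernel_mem:
  fixes f :: "'a::field^'n^'n"
  assumes semi: "mat_subsemigroup S" and iso: "mat_isolated S"
    and f: "f \<in> S" "f ** f = f"
    and kernel: "f *v c1 = 0" "f *v c2 = 0" "r1 v* f = 0" "r2 v* f = 0"
    and dual: "scalar_product r1 c1 = 1" "scalar_product r1 c2 = 0"
      "scalar_product r2 c1 = 0" "scalar_product r2 c2 = 1"
  shows "f + outer_product c1 r1 \<in> S"
proof -
  let ?a = "f + outer_product c1 r2" and ?b = "f + outer_product c2 r1"
  have "?a ** ?a = f" "?b ** ?b = f" "?a ** ?b = f + outer_product c1 r1"
    by (simp_all add: rank_one_calculus f kernel dual)
  then show ?thesis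
    using semi iso f(1) mat_isolated_square_mem unfolding mat_subsemigroup_def by metis
qed

lemma matpow_idempotent_add_outer_product:
  fixes p :: "'a::field^'n^'n"
  assumes p: "p ** p = p" "p *v v = v" "w v* p = w" and wv: "scalar_product w v = 0"
  shows "matpow (p + outer_product v w) (Suc k) = p + outer_product (of_nat (Suc k) *s v) w"
proof (induction k)
  case (Suc k)
  let ?y = "p + outer_product v w"
  have "matpow ?y (Suc (Suc k)) = ?y ** (p + outer_product (of_nat (Suc k) *s v) w)"
    using Suc by (subst matpow.simps(2)) (rule arg_cong)
  also have "\<dots> = p + outer_product v w + outer_product (of_nat (Suc k) *s v) w"
    by (simp add: rank_one_calculus p wv matrix_vector_right_distrib vector_scalar_commute
        scalar_product_add_right scalar_product_scale_right)
  finally show ?case by (simp add: outer_product_def vec_eq_iff algebra_simps)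
qed simp

lemma idempotent_add_outer_product_mem:
  fixes p :: "'a::{field,finite}^'n^'n"
  assumes iso: "mat_isolated S" and "p \<in> S"
    and p: "p ** p = p" "p *v v = v" "w v* p = w" and wv: "scalar_product w v = 0"
  shows "p + outer_product v w \<in> S"
proof -
  have char: "0 < CHAR('a)" by (rule finite_imp_CHAR_pos) simp
  then have "CHAR('a) = Suc (CHAR('a) - 1)" by simp
  then have "matpow (p + outer_product v w) CHAR('a) = p"
    by (metis matpow_idempotent_add_outer_product[OF p wv] of_nat_CHAR outer_product_zero_left
        vector_smult_lzero add_0_right)
  then show ?thesis using iso \<open>p \<in> S\<close> char unfolding mat_isolated_def by metis
qed

lemma singular_idempotent_mem:
  fixes S :: "('a::field^'n^'n) set"
  assumes semi: "mat_subsemigroup S" and iso: "mat_isolated S" and zero: "0 \<in> S"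
  shows "e ** e = e \<Longrightarrow> rank e < CARD('n) \<Longrightarrow> e \<in> S"
proof (induction "rank e" arbitrary: e rule: less_induct)
  case less
  show ?case
  proof (cases "e = 0")
    case True
    then show ?thesis using zero by simp
  next
    case False
    obtain c r where cr: "e *v c = c" "r v* e = r" "scalar_product r c = 1"
      using idempotent_fixed_pair[OF less.prems(1) False] by blast
    obtain y where y: "y \<noteq> 0" "y v* e = 0" using less.prems(2) by (rule left_null_vector_exists)
    obtain w where "scalar_product y w = 1" using y(1) by (rule scalar_product_eq_1_exists)
    then have c': "e *v (w - e *v w) = 0" "scalar_product y (w - e *v w) = 1"
      using idempotent_kernel_projection[OF less.prems(1)] y(2) by simp_all
    define f where "f = e - outer_product c r"
    note f = idempotent_sub_outer_product[OF less.prems(1) cr, folded f_def]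
    have "scalar_product r (w - e *v w) = 0"
      by (metis cr(2) c'(1) scalar_product_vector_matrix_mult scalar_product_zero(2))
    have "scalar_product y c = 0"
      by (metis cr(1) y(2) scalar_product_vector_matrix_mult scalar_product_zero(1))
    with \<open>scalar_product r (w - e *v w) = 0\<close> have "f *v (w - e *v w) = 0" "y v* f = 0"
      by (simp_all add: f_def rank_one_calculus c'(1) y(2))
    moreover have "f \<in> S" using less.hyps f(1,4) less.prems(2) by simp
    ultimately have "f + outer_product c r \<in> S"
      using idempotent_add_outer_product_kernel_mem[OF semi iso _ f(1) f(2) _ f(3)]
        cr(3) c'(2) \<open>scalar_product r (w - e *v w) = 0\<close> \<open>scalar_product y c = 0\<close> by blast
    then show ?thesis by (simp add: f_def)
  qed
qed

lemma idempotent_mem_lower_rank_mem: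
  fixes g :: "'a::{field,finite}^'n^'n"
  assumes semi: "mat_subsemigroup S" and iso: "mat_isolated S"
    and g: "g \<in> S" "g ** g = g" "g \<noteq> 0" and rk: "rank g + 2 \<le> CARD('n)"
  obtains x where "x \<in> S" "rank x < rank g"
proof -
  obtain z1 z2 \<psi> \<rho> where z: "z1 v* g = 0" "z2 v* g = 0"
    "scalar_product z1 \<psi> = 1" "scalar_product z1 \<rho> = 0"
    "scalar_product z2 \<psi> = 0" "scalar_product z2 \<rho> = 1"
    using left_null_space_dual_pair[OF rk] by blast
  define c1 c2 where "c1 = \<psi> - g *v \<psi>" and "c2 = \<rho> - g *v \<rho>"
  have c: "g *v c1 = 0" "g *v c2 = 0"
    "scalar_product z1 c1 = 1" "scalar_product z1 c2 = 0"
    "scalar_product z2 c1 = 0" "scalar_product z2 c2 = 1"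
    using idempotent_kernel_projection[OF g(2)] z by (simp_all add: c1_def c2_def)
  define p where "p = g + outer_product c1 z1"
  have p: "p \<in> S" "p ** p = p"
    using idempotent_add_outer_product_kernel_mem[OF semi iso g(1,2) c(1,2) z(1,2) c(3-6)]
    by (simp_all add: p_def rank_one_calculus g(2) c(1,3) z(1))
  obtain d s where ds: "g *v d = d" "s v* g = s" "scalar_product s d = 1"
    using idempotent_fixed_pair[OF g(2,3)] by blast
  have "scalar_product s c1 = 0"
    by (metis ds(2) c(1) scalar_product_vector_matrix_mult scalar_product_zero(2))
  have "scalar_product z1 d = 0"
    by (metis ds(1) z(1) scalar_product_vector_matrix_mult scalar_product_zero(1))
  \<comment> \<open>This choice of v and w makes s (p + v w) = -z1, which g annihilates.\<close>
  define v w where "v = c1 - d" and "w = s + z1"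
  have "p *v v = v" "w v* p = w" "scalar_product w v = 0"
    using \<open>scalar_product s c1 = 0\<close> \<open>scalar_product z1 d = 0\<close>
    by (simp_all add: p_def v_def w_def rank_one_calculus matrix_vector_mult_diff_distrib
        vector_matrix_left_distrib scalar_product_add_left scalar_product_diff_right c ds z(1))
  then have y: "p + outer_product v w \<in> S"
    using idempotent_add_outer_product_mem[OF iso p(1,2)] by blast
  have "s v* ((p + outer_product v w) ** g) = 0"
    using \<open>scalar_product s c1 = 0\<close>
    by (simp add: p_def v_def w_def rank_one_calculus vector_matrix_mul_assoc[symmetric]
        vector_matrix_left_distrib scalar_product_diff_right ds z(1))
  moreover have "s \<in> range (\<lambda>y. y v* g)" "s \<noteq> 0"
    using ds(2,3) by (metis rangeI, auto)
  ultimately have "rank (g ** ((p + outer_product v w) ** g)) < rank g"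
    using rank_mul_less_left by blast
  moreover have "g ** ((p + outer_product v w) ** g) \<in> S"
    using semi g(1) y unfolding mat_subsemigroup_def by blast
  ultimately show thesis using that by blast
qed

lemma zero_mem_of_idempotent_mem:
  fixes S :: "('a::{field,finite}^'n^'n) set"
  assumes semi: "mat_subsemigroup S" and iso: "mat_isolated S"
  shows "g \<in> S \<Longrightarrow> g ** g = g \<Longrightarrow> rank g + 2 \<le> CARD('n) \<Longrightarrow> 0 \<in> S"
proof (induction "rank g" arbitrary: g rule: less_induct)
  case less
  show ?case
  proof (cases "g = 0")
    case True
    then show ?thesis using less.prems(1) by simp
  next
    case False
    obtain x where "x \<in> S" "rank x < rank g"
      using idempotent_mem_lower_rank_mem[OF semi iso less.prems(1,2) False less.prems(3)] .
    moreover obtain e where "e \<in> S" "e ** e = e" "rank e \<le> rank x"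
      using idempotent_power_mem[OF semi \<open>x \<in> S\<close>] .
    ultimately show ?thesis using less.hyps[of e] less.prems(3) by simp
  qed
qed

lemma rank_mul_less_of_kernel_subset_range:
  fixes E E' :: "'a::field^'n^'n"
  assumes EE: "E ** E = E" and rk: "rank E' < CARD('n)"
    and sub: "{x. E *v x = 0} \<subseteq> range (\<lambda>x. E' *v x)"
  shows "rank (E ** E') < rank E"
proof -
  obtain y where y: "y \<noteq> 0" "y v* E' = 0" using rk by (rule left_null_vector_exists)
  have "scalar_product y x = scalar_product (y v* E) x" for x
  proof -
    obtain z where "x - E *v x = E' *v z"
      using sub idempotent_kernel_projection(1)[OF EE] by blast
    then have "scalar_product y (x - E *v x) = 0"
      by (simp add: scalar_product_vector_matrix_mult[symmetric] y(2))
    then show ?thesis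
      by (simp add: scalar_product_diff_right scalar_product_vector_matrix_mult)
  qed
  then have "y = y v* E" by (simp add: vec_eq_iff flip: scalar_product_axis_right)
  then have "y \<in> range (\<lambda>z. z v* E)" by (metis rangeI)
  then show ?thesis using rank_mul_less_left y by blast
qed

lemma idempotent_mem_of_kernel_subset_range:
  fixes E E' :: "'a::{field,finite}^'n^'n"
  assumes semi: "mat_subsemigroup S" and "E \<in> S" "E' \<in> S" and EE: "E ** E = E"
    and rk: "rank E < CARD('n)" "rank E' < CARD('n)"
    and sub: "{x. E *v x = 0} \<subseteq> range (\<lambda>x. E' *v x)"
  obtains e where "e \<in> S" "e ** e = e" "rank e + 2 \<le> CARD('n)"
proof -
  have "E ** E' \<in> S" using semi assms(2,3) unfolding mat_subsemigroup_def by blast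
  then obtain e where "e \<in> S" "e ** e = e" "rank e \<le> rank (E ** E')"
    by (rule idempotent_power_mem[OF semi])
  moreover have "rank (E ** E') < rank E"
    using EE rk(2) sub by (rule rank_mul_less_of_kernel_subset_range)
  ultimately show thesis using rk(1) that by simp
qed

theorem lemma27:
  fixes S :: "('a::{field,finite}^'n^'n) set"
  assumes n2: "CARD('n) \<ge> 2"
    and semi: "mat_subsemigroup S"
    and iso: "mat_isolated S"
    and cases: "0 \<in> S
      \<or> (\<exists>E\<in>S. \<exists>E'\<in>S. E ** E = E \<and> E' ** E' = E'
            \<and> rank E = CARD('n) - 1 \<and> rank E' = CARD('n) - 1
            \<and> {x. E *v x = 0} \<subseteq> range (\<lambda>x. E' *v x))
      \<or> (\<exists>E\<in>S. E ** E = E \<and> rank E \<le> CARD('n) - 2)"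
  shows "{A :: 'a^'n^'n. rank A \<le> CARD('n) - 1} \<subseteq> S"
proof -
  have "0 \<in> S"
  proof (rule ccontr)
    assume "0 \<notin> S"
    with cases consider
        (pair) E E' where "E \<in> S" "E' \<in> S" "E ** E = E" "rank E = CARD('n) - 1"
          "rank E' = CARD('n) - 1" "{x. E *v x = 0} \<subseteq> range (\<lambda>x. E' *v x)"
      | (low_rank) E where "E \<in> S" "E ** E = E" "rank E \<le> CARD('n) - 2"
      by blast
    then have "\<exists>g\<in>S. g ** g = g \<and> rank g + 2 \<le> CARD('n)"
    proof cases
      case pair
      have "rank E < CARD('n)" "rank E' < CARD('n)" using pair(4,5) n2 by simp_all
      then show ?thesis
        using idempotent_mem_of_kernel_subset_range[OF semi pair(1-3) _ _ pair(6)] by blast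
    next
      case low_rank
      then show ?thesis using n2 by (metis le_diff_conv2)
    qed
    then show False using zero_mem_of_idempotent_mem[OF semi iso] \<open>0 \<notin> S\<close> by blast
  qed
  show ?thesis
  proof
    fix A :: "'a^'n^'n"
    assume "A \<in> {A. rank A \<le> CARD('n) - 1}"
    then have "rank A < CARD('n)" using n2 by simp
    obtain m where m: "0 < m" "matpow A m ** matpow A m = matpow A m"
      by (rule matpow_idempotent_exists)
    then have "matpow A m \<in> S"
      using singular_idempotent_mem[OF semi iso \<open>0 \<in> S\<close>] rank_matpow_le \<open>rank A < CARD('n)\<close>
      by (meson le_less_trans)
    then show "A \<in> S" using iso m(1) unfolding mat_isolated_def by blast
  qed
qed

end
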